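(* The Bergman projection $P$ on the Hartogs triangle $\mathbb{H}$ is not of weak-type $(4/3,4/3)$: there is no constant $C>0$ such that for all $f\in L^{4/3}(\mathbb{H})$ for which the integral defining $P(f)$ converges absolutely, and all $\lambda>0$, $$\left|\{z\in\mathbb{H} : |P(f)(z)|>\lambda\}\right| \le \frac{C\,\|f\|^{4/3}_{L^{4/3}(\mathbb{H})}}{\lambda^{4/3}}.$$
   Context: The Hartogs triangle is $\mathbb{H}=\{(z_1,z_2)\in\mathbb{C}^2:|z_1|<|z_2|<1\}$; $dV$ is Lebesgue measure and $|U|$ the Lebesgue measure of $U$. The Bergman projection on $\mathbb{H}$ (orthogonal projection of $L^2(\mathbb{H})$ onto holomorphic $L^2$ functions) is $P(f)(z)=\int_{\mathbb{H}}K_{\mathbb{H}}(z;\bar w)f(w)\,dV(w)$ with $$K_{\mathbb{H}}(z_1,z_2;\bar w_1,\bar w_2)=\frac{1}{\pi^2 z_2\bar w_2\left(1-\frac{z_1\bar w_1}{z_2\bar w_2}\right)^2(1-z_2\bar w_2)^2}.$$ *)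

theory Defs
  imports "HOL-Analysis.Analysis"
begin

text \<open>Points of C^2 are pairs (z1, z2) :: complex \<times> complex; Lebesgue measure on C^2 = R^4
  is the measure lebesgue on this Euclidean space.\<close>

definition hartogs :: "(complex \<times> complex) set" where
  "hartogs = {(z1, z2). cmod z1 < cmod z2 \<and> cmod z2 < 1}"

definition hartogs_kernel :: "complex \<times> complex \<Rightarrow> complex \<times> complex \<Rightarrow> complex" where
  "hartogs_kernel z w =
     1 / (complex_of_real (pi ^ 2) * snd z * cnj (snd w)
          * (1 - (fst z * cnj (fst w)) / (snd z * cnj (snd w))) ^ 2
          * (1 - snd z * cnj (snd w)) ^ 2)"

definition bergman_proj :: "(complex \<times> complex \<Rightarrow> complex) \<Rightarrow> complex \<times> complex \<Rightarrow> complex" where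
  "bergman_proj f z = (LINT w:hartogs|lebesgue. hartogs_kernel z w * f w)"

end

theory Submission
  imports Defs
begin

text \<open>For \<open>0 < r < 1\<close> take \<open>f\<^sub>r(w) = 1\<^bsub>r < |w\<^sub>2|\<^esub> / (w\<^sub>2 |w\<^sub>2|\<^sup>2)\<close> on the Hartogs triangle. Then
  \<open>|f\<^sub>r|\<^sup>4\<^sup>/\<^sup>3 = |w\<^sub>2|\<^sup>-\<^sup>4\<close>, and its integral \<open>M(r)\<close> grows like \<open>log (1/r)\<close>: every dyadic
  shell \<open>r/2 < |w\<^sub>2| < r\<close> contains a ball of radius \<open>r/10\<close> on which \<open>|w\<^sub>2|\<^sup>-\<^sup>4 \<ge> r\<^sup>-\<^sup>4\<close>.
  For \<open>z\<close> in a fixed small ball around \<open>(0, 1/40)\<close> the kernel factorises as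
  \<open>K(z,w) f\<^sub>r(w) = |f\<^sub>r(w)|\<^sup>4\<^sup>/\<^sup>3 G(z,w) / (\<pi>\<^sup>2 z\<^sub>2)\<close> with \<open>|G - 1| \<le> 1/3\<close>, so there
  \<open>|P f\<^sub>r(z)| \<ge> (2/3) M(r) / (\<pi>\<^sup>2 |z\<^sub>2|) > M(r) / \<pi>\<^sup>2\<close>. The weak-type inequality at level
  \<open>t = M(r)/\<pi>\<^sup>2\<close> then bounds the volume of that ball by \<open>C M(r) / (M(r)/\<pi>\<^sup>2)\<^sup>4\<^sup>/\<^sup>3\<close>,
  i.e. \<open>M(r)\<^sup>1\<^sup>/\<^sup>3\<close> stays bounded as \<open>r \<rightarrow> 0\<close>, which is absurd.\<close>

lemma borel_measurable_fst [measurable]: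
  "(fst :: 'a::topological_space \<times> 'b::topological_space \<Rightarrow> 'a) \<in> borel_measurable borel"
  by (intro borel_measurable_continuous_onI continuous_intros)

lemma borel_measurable_snd [measurable]:
  "(snd :: 'a::topological_space \<times> 'b::topological_space \<Rightarrow> 'b) \<in> borel_measurable borel"
  by (intro borel_measurable_continuous_onI continuous_intros)

lemma borel_measurable_cnj [measurable]: "cnj \<in> borel_measurable borel"
  by (intro borel_measurable_continuous_onI continuous_intros)

lemma mem_ball_pair_norm_bounds:
  fixes w :: "'a::real_normed_vector \<times> 'a"
  assumes "w \<in> ball (0, b) e"
  shows "norm (fst w) < e" "norm b - e < norm (snd w)" "norm (snd w) < norm b + e"
proof -
  have "norm (fst w, snd w - b) = dist w (0, b)"
    by (cases w) (simp add: dist_norm)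
  then have d: "norm (fst w, snd w - b) < e"
    using assms by (simp add: dist_commute)
  show "norm (fst w) < e"
    using norm_fst_le[of "fst w" "snd w - b"] d by simp
  have "norm (snd w - b) < e"
    using norm_snd_le[of "snd w - b" "fst w"] d by simp
  then show "norm b - e < norm (snd w)" "norm (snd w) < norm b + e"
    using norm_triangle_ineq2[of b "snd w"] norm_triangle_ineq2[of "snd w" b]
    by (simp_all add: norm_minus_commute)
qed

lemma norm_integral_ge_of_approx:
  fixes g :: "'a \<Rightarrow> 'b::{banach, second_countable_topology}"
  assumes g: "integrable M g" and h: "integrable M h" and h_nonneg: "\<And>x. 0 \<le> h x"
    and approx: "\<And>x. norm (g x - h x *\<^sub>R c) \<le> e * norm c * h x"
  shows "(1 - e) * norm c * (\<integral>x. h x \<partial>M) \<le> norm (\<integral>x. g x \<partial>M)"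
proof -
  have hc: "integrable M (\<lambda>x. h x *\<^sub>R c)"
    using h by simp
  have split: "(\<integral>x. g x \<partial>M) = (\<integral>x. g x - h x *\<^sub>R c \<partial>M) + (\<integral>x. h x \<partial>M) *\<^sub>R c"
    using g hc h by simp
  have "norm (\<integral>x. g x - h x *\<^sub>R c \<partial>M) \<le> (\<integral>x. norm (g x - h x *\<^sub>R c) \<partial>M)"
    by (rule integral_norm_bound)
  also have "\<dots> \<le> (\<integral>x. e * norm c * h x \<partial>M)"
    using g hc h by (intro integral_mono) (auto intro: approx)
  finally have err: "norm (\<integral>x. g x - h x *\<^sub>R c \<partial>M) \<le> e * norm c * (\<integral>x. h x \<partial>M)"
    by simp
  have "norm c * (\<integral>x. h x \<partial>M) = norm ((\<integral>x. g x \<partial>M) - (\<integral>x. g x - h x *\<^sub>R c \<partial>M))"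
    using h_nonneg unfolding split by (simp add: integral_nonneg_AE)
  also have "\<dots> \<le> norm (\<integral>x. g x \<partial>M) + norm (\<integral>x. g x - h x *\<^sub>R c \<partial>M)"
    by (rule norm_triangle_ineq4)
  finally show ?thesis
    using err by (simp add: algebra_simps)
qed

lemma norm_inverse_sq_prod_le:
  fixes u v :: "'a::real_normed_field"
  assumes "norm u \<le> q" "q < 1" "norm v \<le> p" "p < 1"
  shows "norm (1 / ((1 - u)^2 * (1 - v)^2)) \<le> 1 / ((1 - q)^2 * (1 - p)^2)"
proof -
  have "1 - q \<le> norm (1 - u)" "1 - p \<le> norm (1 - v)"
    using norm_triangle_ineq2[of 1 u] norm_triangle_ineq2[of 1 v] assms by simp_all
  then have "(1 - q)^2 * (1 - p)^2 \<le> norm (1 - u)^2 * norm (1 - v)^2"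
    using assms by (intro mult_mono power_mono) auto
  moreover have "0 < (1 - q)^2 * (1 - p)^2"
    using assms by auto
  ultimately show ?thesis
    by (simp add: norm_divide norm_mult norm_power frac_le)
qed

lemma norm_inverse_sq_prod_minus_one_le:
  fixes u v :: "'a::real_normed_field"
  assumes "norm u \<le> 1/20" "norm v \<le> 1/20"
  shows "norm (1 / ((1 - u)^2 * (1 - v)^2) - 1) \<le> 1/3"
proof -
  have small: "norm ((1 - x)^2 - 1) \<le> 41/400" if "norm x \<le> 1/20" for x :: 'a
  proof -
    have "norm ((1 - x)^2 - 1) = norm (x^2 - 2 * x)"
      by (simp add: power2_eq_square algebra_simps)
    also have "\<dots> \<le> norm x ^ 2 + 2 * norm x"
      using norm_triangle_ineq4[of "x^2" "2 * x"] by (simp add: norm_power norm_mult)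
    also have "\<dots> \<le> (1/20)^2 + 2 * (1/20)"
      using that by (intro add_mono power_mono) auto
    finally show ?thesis
      by (simp add: power2_eq_square)
  qed
  define a where "a = (1 - u)^2 - 1"
  define b where "b = (1 - v)^2 - 1"
  define d where "d = (1 - u)^2 * (1 - v)^2"
  have "norm (d - 1) = norm (a + b + a * b)"
    by (simp add: a_def b_def d_def algebra_simps)
  also have "\<dots> \<le> norm a + norm b + norm a * norm b"
    using norm_triangle_ineq[of "a + b" "a * b"] norm_triangle_ineq[of a b] by (simp add: norm_mult)
  also have "\<dots> \<le> 41/400 + 41/400 + 41/400 * (41/400)"
    using small[OF assms(1)] small[OF assms(2)] unfolding a_def b_def
    by (intro add_mono mult_mono) auto
  finally have d1: "norm (d - 1) \<le> 1/4"
    by simp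
  then have d0: "3/4 \<le> norm d"
    using norm_triangle_ineq2[of 1 d] by (simp add: norm_minus_commute)
  then have "d \<noteq> 0"
    by auto
  then have "1 / d - 1 = (1 - d) / d"
    by (simp add: field_simps)
  then have "norm (1 / d - 1) = norm (d - 1) / norm d"
    by (simp add: norm_divide norm_minus_commute)
  also have "\<dots> \<le> (1/4) / (3/4)"
    using d1 d0 by (intro frac_le) auto
  finally show ?thesis
    by (simp add: d_def)
qed

lemma le_powr_of_weak_type_ineq:
  fixes m C A c p :: real
  assumes "0 < m" "0 < C" "0 < A" "0 < c" "1 < p"
    and weak: "m \<le> C * A / (A / c) powr p"
  shows "A \<le> (C * c powr p / m) powr (1 / (p - 1))"
proof -
  have "m * (A / c) powr p \<le> C * A"
    using weak assms by (simp add: le_divide_eq)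
  then have "c powr p * (m * (A / c) powr p) \<le> c powr p * (C * A)"
    using assms by simp
  moreover have "c powr p * (A / c) powr p = A * A powr (p - 1)"
    using assms by (simp add: powr_divide powr_diff)
  ultimately have "A * (m * A powr (p - 1)) \<le> A * (C * c powr p)"
    by (simp add: algebra_simps)
  then have "A powr (p - 1) \<le> C * c powr p / m"
    using assms by (simp add: field_simps)
  then have "(A powr (p - 1)) powr (1 / (p - 1)) \<le> (C * c powr p / m) powr (1 / (p - 1))"
    using assms by (intro powr_mono2) auto
  then show ?thesis
    using assms by (simp add: powr_powr)
qed

lemma hartogs_borel [measurable]: "hartogs \<in> sets borel"
  unfolding hartogs_def by measurable

lemma borel_measurable_hartogs_kernel [measurable]:
  assumes [measurable]: "f \<in> borel_measurable M" "g \<in> borel_measurable M"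
  shows "(\<lambda>x. hartogs_kernel (f x) (g x)) \<in> borel_measurable M"
  unfolding hartogs_kernel_def by measurable

lemma bounded_hartogs: "bounded hartogs"
  unfolding bounded_iff
proof (intro exI ballI)
  fix w assume "w \<in> hartogs"
  then have "cmod (fst w) < 1" "cmod (snd w) < 1"
    unfolding hartogs_def by auto
  then show "norm w \<le> 2"
    using norm_Pair_le[of "fst w" "snd w"] by simp
qed

lemma hartogs_norm_products_le:
  assumes z: "z \<in> hartogs" and w: "w \<in> hartogs"
  shows "cmod (fst z * cnj (fst w) / (snd z * cnj (snd w))) \<le> cmod (fst z) / cmod (snd z)"
    and "cmod (snd z * cnj (snd w)) \<le> cmod (snd z)"
proof -
  have h: "cmod (fst z) < cmod (snd z)" "cmod (fst w) < cmod (snd w)" "cmod (snd w) < 1"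
    using z w unfolding hartogs_def by auto
  have "cmod (fst z * cnj (fst w) / (snd z * cnj (snd w)))
      = cmod (fst z) / cmod (snd z) * (cmod (fst w) / cmod (snd w))"
    by (simp add: norm_divide norm_mult)
  also have "\<dots> \<le> cmod (fst z) / cmod (snd z) * 1"
    using h by (intro mult_left_mono) (auto simp: divide_le_eq)
  finally show "cmod (fst z * cnj (fst w) / (snd z * cnj (snd w))) \<le> cmod (fst z) / cmod (snd z)"
    by simp
  show "cmod (snd z * cnj (snd w)) \<le> cmod (snd z)"
    using h by (simp add: norm_mult mult_left_le)
qed

definition hartogs_cut :: "real \<Rightarrow> (complex \<times> complex) set" where
  "hartogs_cut r = {w \<in> hartogs. r < cmod (snd w)}"

definition cutoff_fn :: "real \<Rightarrow> complex \<times> complex \<Rightarrow> complex" where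
  "cutoff_fn r w = (if w \<in> hartogs_cut r then 1 / (snd w * of_real (cmod (snd w)) ^ 2) else 0)"

definition cutoff_weight :: "real \<Rightarrow> complex \<times> complex \<Rightarrow> real" where
  "cutoff_weight r w = indicator (hartogs_cut r) w * cmod (snd w) powr -4"

definition cutoff_mass :: "real \<Rightarrow> real" where
  "cutoff_mass r = (\<integral>w. cutoff_weight r w \<partial>lborel)"

definition kernel_factor :: "complex \<times> complex \<Rightarrow> complex \<times> complex \<Rightarrow> complex" where
  "kernel_factor z w =
     1 / ((1 - fst z * cnj (fst w) / (snd z * cnj (snd w)))^2 * (1 - snd z * cnj (snd w))^2)"

lemma hartogs_cut_borel [measurable]: "hartogs_cut r \<in> sets borel"
  unfolding hartogs_cut_def by measurable

lemma cutoff_fn_borel [measurable]: "cutoff_fn r \<in> borel_measurable borel"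
  unfolding cutoff_fn_def by measurable

lemma cutoff_weight_borel [measurable]: "cutoff_weight r \<in> borel_measurable borel"
  unfolding cutoff_weight_def by measurable

lemma cutoff_weight_nonneg: "0 \<le> cutoff_weight r w"
  by (simp add: cutoff_weight_def)

lemma indicator_hartogs_scaleR_mult_cutoff_fn:
  "indicator hartogs w *\<^sub>R (c * cutoff_fn r w) = c * cutoff_fn r w"
  by (simp add: cutoff_fn_def hartogs_cut_def)

lemma norm_cutoff_fn_powr: "cmod (cutoff_fn r w) powr (4/3) = cutoff_weight r w"
proof (cases "w \<in> hartogs_cut r")
  case True
  then have "cmod (cutoff_fn r w) = cmod (snd w) powr -3"
    by (simp add: cutoff_fn_def norm_divide norm_mult norm_power powr_minus_divide powr_realpow
        power3_eq_cube power2_eq_square)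
  then show ?thesis
    using True by (simp add: cutoff_weight_def powr_powr)
qed (simp add: cutoff_fn_def cutoff_weight_def)

lemma integrable_cutoff_weight:
  assumes "0 < r"
  shows "integrable lborel (cutoff_weight r)"
proof (rule Bochner_Integration.integrable_bound)
  show "integrable lborel (\<lambda>w. r powr -4 * indicator hartogs w :: real)"
    using emeasure_bounded_finite[OF bounded_hartogs]
    by (intro integrable_mult_right integrable_real_indicator) auto
  have "cutoff_weight r w \<le> r powr -4 * indicator hartogs w" for w
    using assms by (cases "w \<in> hartogs_cut r") (auto simp: cutoff_weight_def hartogs_cut_def intro: powr_mono2')
  then show "AE w in lborel. norm (cutoff_weight r w) \<le> norm (r powr -4 * indicator hartogs w :: real)"
    by (simp add: cutoff_weight_nonneg)
qed simp

lemma cutoff_weight_antimono: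
  assumes "r \<le> s"
  shows "cutoff_weight s w \<le> cutoff_weight r w"
  using assms by (auto simp: cutoff_weight_def hartogs_cut_def indicator_def)

lemma cutoff_weight_half_ge:
  fixes w :: "complex \<times> complex"
  assumes r: "0 < r" "r \<le> 1"
  shows "cutoff_weight r w + indicator (ball (0, of_real (3/4 * r)) (r/10)) w / r^4
    \<le> cutoff_weight (r/2) w"
proof (cases "w \<in> ball (0, of_real (3/4 * r)) (r/10)")
  case True
  then have b: "cmod (fst w) < r/10" "3/4 * r - r/10 < cmod (snd w)" "cmod (snd w) < 3/4 * r + r/10"
    using mem_ball_pair_norm_bounds[OF True] r by simp_all
  then have "w \<notin> hartogs_cut r" "w \<in> hartogs_cut (r/2)"
    using r by (auto simp: hartogs_cut_def hartogs_def)
  moreover have "1 / r^4 \<le> cmod (snd w) powr -4"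
  proof -
    have "1 / r^4 \<le> 1 / cmod (snd w) ^ 4"
      using b r by (intro divide_left_mono power_mono mult_pos_pos) auto
    then show ?thesis
      using b r by (simp add: powr_minus_divide powr_realpow)
  qed
  ultimately show ?thesis
    using True by (simp add: cutoff_weight_def)
next
  case False
  then show ?thesis
    using cutoff_weight_antimono[of "r/2" r w] r by simp
qed

lemma cutoff_mass_half_ge:
  assumes r: "0 < r" "r \<le> 1"
  shows "cutoff_mass r + unit_ball_vol 4 / 10^4 \<le> cutoff_mass (r/2)"
proof -
  define B :: "(complex \<times> complex) set" where "B = ball (0, of_real (3/4 * r)) (r/10)"
  have B: "integrable lborel (indicator B :: _ \<Rightarrow> real)"
    unfolding B_def by (intro integrable_real_indicator emeasure_bounded_finite) auto
  have "unit_ball_vol 4 / 10^4 = (\<integral>w. indicator B w / r^4 \<partial>lborel)"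
    using r by (simp add: B_def content_ball power_divide)
  then have "cutoff_mass r + unit_ball_vol 4 / 10^4
      = (\<integral>w. cutoff_weight r w + indicator B w / r^4 \<partial>lborel)"
    unfolding cutoff_mass_def using integrable_cutoff_weight[OF r(1)] B by simp
  also have "\<dots> \<le> cutoff_mass (r/2)"
    unfolding cutoff_mass_def B_def using integrable_cutoff_weight r B[unfolded B_def]
    by (intro integral_mono cutoff_weight_half_ge) auto
  finally show ?thesis .
qed

lemma cutoff_mass_dyadic_ge: "real n * (unit_ball_vol 4 / 10^4) \<le> cutoff_mass ((1/2)^n)"
proof (induction n)
  case 0
  show ?case
    by (simp add: cutoff_mass_def cutoff_weight_nonneg)
next
  case (Suc n)
  have "(1/2::real)^n \<le> 1"
    by (simp add: power_le_one)
  then have "cutoff_mass ((1/2)^n) + unit_ball_vol 4 / 10^4 \<le> cutoff_mass ((1/2)^Suc n)"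
    using cutoff_mass_half_ge[of "(1/2)^n"] by (simp add: field_simps)
  then show ?case
    using Suc.IH by (simp add: algebra_simps)
qed

lemma hartogs_kernel_mult_cutoff_fn:
  "hartogs_kernel z w * cutoff_fn r w
     = cutoff_weight r w *\<^sub>R (kernel_factor z w / (of_real (pi^2) * snd z))"
proof (cases "w \<in> hartogs_cut r")
  case True
  then have w2: "0 < cmod (snd w)"
    using norm_ge_zero[of "fst w"] by (auto simp: hartogs_cut_def hartogs_def)
  define D where "D = (1 - fst z * cnj (fst w) / (snd z * cnj (snd w)))^2 * (1 - snd z * cnj (snd w))^2"
  have "cnj (snd w) * snd w = of_real (cmod (snd w) ^ 2)"
    using complex_norm_square[of "snd w"] by (simp only: mult.commute)
  then have "inverse (cnj (snd w)) * inverse (snd w * of_real (cmod (snd w)) ^ 2)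
      = inverse (of_real (cmod (snd w) ^ 2 * cmod (snd w) ^ 2))"
    by (simp only: inverse_mult_distrib[symmetric] mult.assoc[symmetric] of_real_mult of_real_power)
  also have "\<dots> = of_real (cmod (snd w) powr -4)"
    using w2 by (simp add: powr_minus powr_realpow power2_eq_square power4_eq_xxxx mult_ac)
  finally have "inverse (cnj (snd w)) * inverse (snd w * of_real (cmod (snd w)) ^ 2)
      = of_real (cmod (snd w) powr -4)" .
  moreover have "hartogs_kernel z w * cutoff_fn r w
      = inverse (of_real (pi^2) * snd z * D) * (inverse (cnj (snd w)) * inverse (snd w * of_real (cmod (snd w)) ^ 2))"
    using True unfolding hartogs_kernel_def cutoff_fn_def D_def
    by (simp add: divide_inverse inverse_mult_distrib)
  moreover have "kernel_factor z w / (of_real (pi^2) * snd z) = inverse (of_real (pi^2) * snd z * D)"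
    unfolding kernel_factor_def D_def by (simp add: divide_inverse inverse_mult_distrib)
  ultimately show ?thesis
    using True by (simp add: cutoff_weight_def scaleR_conv_of_real)
qed (simp add: cutoff_fn_def cutoff_weight_def)

lemma norm_of_real_pi_sq_mult: "cmod (of_real (pi^2) * u) = pi^2 * cmod u"
  by (simp only: norm_mult norm_of_real) simp

lemma integrable_kernel_mult_cutoff_fn:
  assumes z: "z \<in> hartogs" and r: "0 < r"
  shows "integrable lborel (\<lambda>w. hartogs_kernel z w * cutoff_fn r w)"
proof (rule Bochner_Integration.integrable_bound)
  define N where "N = 1 / ((1 - cmod (fst z) / cmod (snd z))^2 * (1 - cmod (snd z))^2)"
  define M where "M = N / (pi^2 * cmod (snd z))"
  have h: "cmod (fst z) < cmod (snd z)" "cmod (snd z) < 1"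
    using z by (auto simp: hartogs_def)
  have "cmod (kernel_factor z w) \<le> N" if "w \<in> hartogs" for w
    unfolding kernel_factor_def N_def
    using hartogs_norm_products_le[OF z that] h
    by (intro norm_inverse_sq_prod_le) (auto simp: divide_less_eq)
  then have bound: "cmod (kernel_factor z w / (of_real (pi^2) * snd z)) \<le> M" if "w \<in> hartogs" for w
    unfolding M_def norm_divide norm_of_real_pi_sq_mult using that by (simp add: divide_right_mono)
  have "cmod (hartogs_kernel z w * cutoff_fn r w) \<le> cutoff_weight r w * M" for w
  proof (cases "w \<in> hartogs_cut r")
    case True
    then show ?thesis
      unfolding hartogs_kernel_mult_cutoff_fn norm_scaleR abs_of_nonneg[OF cutoff_weight_nonneg]
      using bound[of w] by (intro mult_left_mono) (auto simp: hartogs_cut_def cutoff_weight_nonneg)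
  qed (simp add: cutoff_fn_def cutoff_weight_def)
  moreover have "0 \<le> M"
    by (simp add: M_def N_def)
  ultimately show "AE w in lborel. norm (hartogs_kernel z w * cutoff_fn r w) \<le> norm (cutoff_weight r w * M)"
    by (simp add: cutoff_weight_nonneg)
  show "integrable lborel (\<lambda>w. cutoff_weight r w * M)"
    using integrable_cutoff_weight[OF r] by simp
qed simp

lemma bergman_proj_cutoff_fn:
  "bergman_proj (cutoff_fn r) z = (\<integral>w. hartogs_kernel z w * cutoff_fn r w \<partial>lborel)"
  unfolding bergman_proj_def set_lebesgue_integral_def indicator_hartogs_scaleR_mult_cutoff_fn
  by (rule integral_completion) measurable

lemma borel_measurable_bergman_proj_cutoff_fn [measurable]:
  "bergman_proj (cutoff_fn r) \<in> borel_measurable borel"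
proof -
  have "sets (borel \<Otimes>\<^sub>M lborel) = sets (borel :: ((complex \<times> complex) \<times> (complex \<times> complex)) measure)"
    by (metis borel_prod sets_lborel sets_pair_measure_cong)
  then have "(\<lambda>p. hartogs_kernel (fst p) (snd p) * cutoff_fn r (snd p)) \<in> borel_measurable (borel \<Otimes>\<^sub>M lborel)"
    unfolding measurable_cong_sets[OF _ refl] by measurable
  then have "(\<lambda>(z, w). hartogs_kernel z w * cutoff_fn r w) \<in> borel_measurable (borel \<Otimes>\<^sub>M lborel)"
    by (simp add: case_prod_beta')
  then show ?thesis
    unfolding bergman_proj_cutoff_fn by (rule lborel.borel_measurable_lebesgue_integral)
qed

lemma set_borel_measurable_cutoff_fn: "set_borel_measurable lebesgue hartogs (cutoff_fn r)"
  using indicator_hartogs_scaleR_mult_cutoff_fn[where c=1]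
  unfolding set_borel_measurable_def by (simp add: measurable_completion)

lemma nn_integral_cutoff_fn_powr:
  assumes "0 < r"
  shows "(\<integral>\<^sup>+ w \<in> hartogs. ennreal (cmod (cutoff_fn r w) powr (4/3)) \<partial>lebesgue) = ennreal (cutoff_mass r)"
proof -
  have "(\<integral>\<^sup>+ w \<in> hartogs. ennreal (cmod (cutoff_fn r w) powr (4/3)) \<partial>lebesgue)
      = (\<integral>\<^sup>+ w. ennreal (cutoff_weight r w) \<partial>lborel)"
    unfolding norm_cutoff_fn_powr
    by (auto simp: nn_integral_completion cutoff_weight_def hartogs_cut_def indicator_def
        intro!: nn_integral_cong)
  also have "\<dots> = ennreal (cutoff_mass r)"
    unfolding cutoff_mass_def
    using integrable_cutoff_weight[OF assms] by (simp add: nn_integral_eq_integral cutoff_weight_nonneg)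
  finally show ?thesis .
qed

lemma set_integrable_kernel_mult_cutoff_fn:
  assumes "z \<in> hartogs" "0 < r"
  shows "set_integrable lebesgue hartogs (\<lambda>w. hartogs_kernel z w * cutoff_fn r w)"
  using integrable_kernel_mult_cutoff_fn[OF assms]
  unfolding set_integrable_def indicator_hartogs_scaleR_mult_cutoff_fn
  by (subst integrable_completion) simp_all

lemma hartogs_bounds_of_mem_ball:
  assumes "z \<in> ball (0, 1/40) (1/1000)"
  shows "z \<in> hartogs" "cmod (fst z) / cmod (snd z) \<le> 1/20" "cmod (snd z) \<le> 1/20" "0 < cmod (snd z)"
proof -
  have b: "cmod (fst z) < 1/1000" "1/40 - 1/1000 < cmod (snd z)" "cmod (snd z) < 1/40 + 1/1000"
    using mem_ball_pair_norm_bounds[OF assms] by simp_all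
  then show "z \<in> hartogs" "cmod (snd z) \<le> 1/20" "0 < cmod (snd z)"
    by (auto simp: hartogs_def)
  show "cmod (fst z) / cmod (snd z) \<le> 1/20"
    using b by (simp add: divide_le_eq)
qed

lemma cutoff_mass_lt_norm_bergman_proj:
  assumes z: "z \<in> ball (0, 1/40) (1/1000)" and r: "0 < r" and mass: "0 < cutoff_mass r"
  shows "cutoff_mass r / pi^2 < cmod (bergman_proj (cutoff_fn r) z)"
proof -
  note zb = hartogs_bounds_of_mem_ball[OF z]
  define c where "c = 1 / (of_real (pi^2) * snd z)"
  have "cmod (hartogs_kernel z w * cutoff_fn r w - cutoff_weight r w *\<^sub>R c)
      \<le> 1/3 * cmod c * cutoff_weight r w" for w
  proof (cases "w \<in> hartogs_cut r")
    case True
    then have w: "w \<in> hartogs"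
      by (simp add: hartogs_cut_def)
    have "hartogs_kernel z w * cutoff_fn r w - cutoff_weight r w *\<^sub>R c
        = cutoff_weight r w *\<^sub>R (c * (kernel_factor z w - 1))"
      unfolding hartogs_kernel_mult_cutoff_fn c_def by (simp add: diff_divide_distrib scaleR_diff_right)
    then have "cmod (hartogs_kernel z w * cutoff_fn r w - cutoff_weight r w *\<^sub>R c)
        = cmod c * cutoff_weight r w * cmod (kernel_factor z w - 1)"
      by (simp add: norm_mult cutoff_weight_nonneg)
    also have "\<dots> \<le> cmod c * cutoff_weight r w * (1/3)"
    proof (rule mult_left_mono)
      show "cmod (kernel_factor z w - 1) \<le> 1/3"
        unfolding kernel_factor_def
        using hartogs_norm_products_le[OF zb(1) w] zb(2,3)
        by (intro norm_inverse_sq_prod_minus_one_le) linarith+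
    qed (simp add: cutoff_weight_nonneg)
    finally show ?thesis
      by simp
  qed (simp add: cutoff_fn_def cutoff_weight_def)
  then have "(1 - 1/3) * cmod c * cutoff_mass r \<le> cmod (bergman_proj (cutoff_fn r) z)"
    unfolding bergman_proj_cutoff_fn cutoff_mass_def
    by (intro norm_integral_ge_of_approx integrable_kernel_mult_cutoff_fn zb(1) r
        integrable_cutoff_weight cutoff_weight_nonneg)
  moreover have "cutoff_mass r / pi^2 < (1 - 1/3) * cmod c * cutoff_mass r"
  proof -
    have "1 < (2/3) / cmod (snd z)"
      using zb by (simp add: field_simps)
    then have "cutoff_mass r / pi^2 * 1 < cutoff_mass r / pi^2 * ((2/3) / cmod (snd z))"
      using mass by (intro mult_strict_left_mono) auto
    moreover have "cmod c = 1 / (pi^2 * cmod (snd z))"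
      unfolding c_def norm_divide norm_of_real_pi_sq_mult by simp
    ultimately show ?thesis
      by (simp add: field_simps)
  qed
  ultimately show ?thesis
    by linarith
qed

lemma emeasure_superlevel_bergman_proj_cutoff_fn_ge:
  assumes "0 < r" "0 < cutoff_mass r"
  shows "ennreal (unit_ball_vol 4 / 10^12)
    \<le> emeasure lebesgue {z \<in> hartogs. cutoff_mass r / pi^2 < cmod (bergman_proj (cutoff_fn r) z)}"
proof -
  have "ennreal (unit_ball_vol 4 / 10^12) = emeasure lebesgue (ball (0, 1/40) (1/1000) :: (complex \<times> complex) set)"
    by (simp add: emeasure_ball power_one_over)
  also have "\<dots> \<le> emeasure lebesgue {z \<in> hartogs. cutoff_mass r / pi^2 < cmod (bergman_proj (cutoff_fn r) z)}"
  proof (rule emeasure_mono)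
    show "ball (0, 1/40) (1/1000) \<subseteq> {z \<in> hartogs. cutoff_mass r / pi^2 < cmod (bergman_proj (cutoff_fn r) z)}"
      using hartogs_bounds_of_mem_ball(1) cutoff_mass_lt_norm_bergman_proj assms by blast
    have "{z \<in> hartogs. cutoff_mass r / pi^2 < cmod (bergman_proj (cutoff_fn r) z)} \<in> sets borel"
      by measurable
    then show "{z \<in> hartogs. cutoff_mass r / pi^2 < cmod (bergman_proj (cutoff_fn r) z)} \<in> sets lebesgue"
      by simp
  qed
  finally show ?thesis .
qed

lemma cutoff_mass_le_of_weak_type:
  assumes C: "0 < C" and r: "0 < r" and mass: "0 < cutoff_mass r"
    and weak: "emeasure lebesgue {z \<in> hartogs. cutoff_mass r / pi^2 < cmod (bergman_proj (cutoff_fn r) z)}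
      \<le> ennreal C * ennreal (cutoff_mass r) / ennreal ((cutoff_mass r / pi^2) powr (4/3))"
  shows "cutoff_mass r \<le> (C * (pi^2) powr (4/3) / (unit_ball_vol 4 / 10^12)) powr 3"
proof -
  have "ennreal (unit_ball_vol 4 / 10^12)
      \<le> ennreal (C * cutoff_mass r / (cutoff_mass r / pi^2) powr (4/3))"
    using order_trans[OF emeasure_superlevel_bergman_proj_cutoff_fn_ge[OF r mass] weak] C mass
    by (simp add: ennreal_mult[symmetric] divide_ennreal)
  then have "unit_ball_vol 4 / 10^12 \<le> C * cutoff_mass r / (cutoff_mass r / pi^2) powr (4/3)"
    using C mass by (subst (asm) ennreal_le_iff) auto
  from le_powr_of_weak_type_ineq[OF _ C mass _ _ this] show ?thesis
    by simp
qed

theorem theorem4p1: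
  shows "\<not> (\<exists>C::real. C > 0 \<and>
     (\<forall>f :: complex \<times> complex \<Rightarrow> complex.
        set_borel_measurable lebesgue hartogs f \<longrightarrow>
        (\<integral>\<^sup>+ w \<in> hartogs. ennreal (cmod (f w) powr (4/3)) \<partial>lebesgue) < \<infinity> \<longrightarrow>
        (\<forall>z\<in>hartogs. set_integrable lebesgue hartogs (\<lambda>w. hartogs_kernel z w * f w)) \<longrightarrow>
        (\<forall>t::real. t > 0 \<longrightarrow>
           emeasure lebesgue {z \<in> hartogs. cmod (bergman_proj f z) > t}
             \<le> ennreal C * (\<integral>\<^sup>+ w \<in> hartogs. ennreal (cmod (f w) powr (4/3)) \<partial>lebesgue)
                 / ennreal (t powr (4/3)))))"
proof (intro notI, elim exE conjE, goal_cases)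
  case (1 C)
  note C = \<open>C > 0\<close> and weak = 1(2)
  define K where "K = (C * (pi^2) powr (4/3) / (unit_ball_vol 4 / 10^12)) powr 3"
  define e where "e = unit_ball_vol 4 / (10^4 :: real)"
  have "0 < e"
    by (simp add: e_def)
  have bounded: "real n * e \<le> K" if "1 \<le> n" for n
  proof -
    define r :: real where "r = (1/2)^n"
    have "0 < real n * e"
      using that \<open>0 < e\<close> by simp
    then have r: "0 < r" and mass: "0 < cutoff_mass r"
      using cutoff_mass_dyadic_ge[of n] by (simp_all add: r_def e_def)
    have "cutoff_mass r \<le> K"
      unfolding K_def using weak[rule_format, of "cutoff_fn r" "cutoff_mass r / pi^2"] C r mass
      by (intro cutoff_mass_le_of_weak_type)
        (simp_all add: set_borel_measurable_cutoff_fn nn_integral_cutoff_fn_powr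
          set_integrable_kernel_mult_cutoff_fn)
    then show ?thesis
      using cutoff_mass_dyadic_ge[of n] by (simp add: r_def e_def)
  qed
  obtain n :: nat where "K < real n * e"
    using reals_Archimedean2[of "K / e"] \<open>0 < e\<close> by (auto simp: divide_less_eq)
  then show False
    using bounded[of "Suc n"] \<open>0 < e\<close> by (simp add: distrib_right)
qed

end
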